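(* Let $n\ge1$ and suppose $d^\nabla_1=\nabla,d^\nabla_2,\dots,d^\nabla_n$ solve the equations $(A_k)$ for all $k\le n$. Then the equation $(A_{n+1})$ is compatible, i.e. $\big[\delta,\ \tfrac12\sum_{1\le k\le n}[d^\nabla_k,d^\nabla_{n+1-k}]\big]=0$.
   Context: $M$ smooth manifold, $\nabla$ torsion-free (Levi-Civita) connection on $T_M$. $C^*(\mathfrak h)=\Omega_M\otimes_{C^\infty_M}\Gamma(\widehat{\mathrm{Sym}}(T_M^\vee))$, locally with coordinates $x^i$, $y_i=\partial/\partial x^i$, dual frame $y^i$ (degree 0). $\delta=dx^i\partial/\partial y^i$; $d^\nabla_1=\nabla$ acts as the induced covariant derivative; for $k\ge2$, $d^\nabla_k$ is an $\Omega_M$-linear derivation with $d^\nabla_k(y^i)\in\Omega^1_M\otimes\Gamma(\mathrm{Sym}^kT_M^\vee)$; $[\cdot,\cdot]$ is the graded commutator of derivations. Equations: $(A_1)$: $-[\delta,d^\nabla_1]=0$; for $m\ge2$, $(A_m)$: $-[\delta,d^\nabla_m]=\frac12\sum_{1\le k\le m-1}[d^\nabla_k,d^\nabla_{m-k}]$. Equation $(A_m)$ is called compatible if its right-hand side graded-commutes with $\delta$. *)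

theory Defs
  imports "HOL-Analysis.Analysis"
begin

text \<open>Abstract algebraic model: C*(h) is a real vector space 'v, graded by the
  (form-)degree via subspaces V p; the operators delta and d k (k >= 1) are linear
  endomorphisms of degree 1.  gbr p q f g is the graded commutator of homogeneous
  operators f, g of degrees p, q.\<close>

definition gbr :: "int \<Rightarrow> int \<Rightarrow> ('v::real_vector \<Rightarrow> 'v) \<Rightarrow> ('v \<Rightarrow> 'v) \<Rightarrow> ('v \<Rightarrow> 'v)" where
  "gbr p q f g = (\<lambda>x. f (g x) - (if even (p * q) then 1 else -1) *\<^sub>R g (f x))"

definition homog :: "(int \<Rightarrow> 'v::real_vector set) \<Rightarrow> int \<Rightarrow> ('v \<Rightarrow> 'v) \<Rightarrow> bool" where
  "homog V p f \<longleftrightarrow> (\<forall>q. \<forall>x\<in>V q. f x \<in> V (q + p))"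

definition rhsA :: "(nat \<Rightarrow> 'v::real_vector \<Rightarrow> 'v) \<Rightarrow> nat \<Rightarrow> ('v \<Rightarrow> 'v)" where
  "rhsA d m = (\<lambda>x. (1/2) *\<^sub>R (\<Sum>k = 1..m - 1. gbr 1 1 (d k) (d (m - k)) x))"

definition solvesA :: "('v::real_vector \<Rightarrow> 'v) \<Rightarrow> (nat \<Rightarrow> 'v \<Rightarrow> 'v) \<Rightarrow> nat \<Rightarrow> bool" where
  "solvesA delta d m \<longleftrightarrow>
     (if m = 1 then (\<forall>x. - gbr 1 1 delta (d 1) x = 0)
      else (\<forall>x. - gbr 1 1 delta (d m) x = rhsA d m x))"

text \<open>(A_m) is compatible: its right-hand side (degree 2) graded-commutes with delta.\<close>
definition compatibleA :: "('v::real_vector \<Rightarrow> 'v) \<Rightarrow> (nat \<Rightarrow> 'v \<Rightarrow> 'v) \<Rightarrow> nat \<Rightarrow> bool" where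
  "compatibleA delta d m \<longleftrightarrow> (\<forall>x. gbr 1 2 delta (rhsA d m) x = 0)"

end

theory Submission
  imports Defs
begin

text \<open>Writing \<open>R\<^sub>m = \<Sum>\<^sub>k d\<^sub>k d\<^sub>m\<^sub>-\<^sub>k\<close> for the right-hand side of \<open>(A\<^sub>m)\<close>, the equations
  \<open>(A\<^sub>k)\<close> for \<open>k \<le> n\<close> say \<open>\<delta> d\<^sub>k = - d\<^sub>k \<delta> - R\<^sub>k\<close>. Moving \<open>\<delta>\<close> through both factors of
  every term of \<open>R\<^sub>n\<^sub>+\<^sub>1\<close> gives \<open>\<delta> R\<^sub>n\<^sub>+\<^sub>1 = R\<^sub>n\<^sub>+\<^sub>1 \<delta> + \<Sum>\<^sub>k d\<^sub>k R\<^sub>n\<^sub>+\<^sub>1\<^sub>-\<^sub>k - \<Sum>\<^sub>k R\<^sub>k d\<^sub>n\<^sub>+\<^sub>1\<^sub>-\<^sub>k\<close>,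
  and the two error sums agree: both are the sum of \<open>d\<^sub>a d\<^sub>b d\<^sub>c\<close> over all \<open>a + b + c = n + 1\<close>.\<close>

lemma gbr_1_1: "gbr 1 1 f g x = f (g x) + g (f x)"
  by (simp add: gbr_def)

lemma gbr_1_2: "gbr 1 2 f g x = f (g x) - g (f x)"
  by (simp add: gbr_def)

lemma rhsA_eq_sum_comp: "rhsA d m x = (\<Sum>k=1..m-1. d k (d (m-k) x))"
proof -
  have "(\<Sum>k=1..m-1. d (m-k) (d k x)) = (\<Sum>k=1..m-1. d k (d (m-k) x))"
    by (rule sum.reindex_bij_witness[where i="\<lambda>k. m-k" and j="\<lambda>k. m-k"]) auto
  then show ?thesis
    unfolding rhsA_def gbr_1_1 by (simp add: sum.distrib scaleR_2[symmetric] del: scaleR_2)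
qed

lemma delta_comp_eq_if_solvesA:
  assumes "solvesA delta d k" and "1 \<le> k"
  shows "delta (d k y) = - d k (delta y) - rhsA d k y"
proof (cases "k = 1")
  case True
  then show ?thesis
    using assms(1) by (simp add: solvesA_def gbr_1_1 rhsA_eq_sum_comp algebra_simps)
next
  case False
  then show ?thesis
    using assms by (simp add: solvesA_def gbr_1_1 algebra_simps)
qed

lemma sum_split_first_eq_sum_split_last:
  fixes F :: "nat \<Rightarrow> nat \<Rightarrow> nat \<Rightarrow> 'a::comm_monoid_add"
  shows "(\<Sum>k=1..n. \<Sum>a=1..n-k. F k a (n+1-k-a)) = (\<Sum>k=1..n. \<Sum>a=1..k-1. F a (k-a) (n+1-k))"
proof -
  have "(\<Sum>k=1..n. \<Sum>a=1..n-k. F k a (n+1-k-a))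
      = (\<Sum>(k,a)\<in>Sigma {1..n} (\<lambda>k. {1..n-k}). F k a (n+1-k-a))"
    by (rule sum.Sigma) auto
  also have "\<dots> = (\<Sum>(k,a)\<in>Sigma {1..n} (\<lambda>k. {1..k-1}). F a (k-a) (n+1-k))"
    by (rule sum.reindex_bij_witness[where i="\<lambda>(k,a). (a, k-a)" and j="\<lambda>(k,a). (k+a, k)"]) auto
  also have "\<dots> = (\<Sum>k=1..n. \<Sum>a=1..k-1. F a (k-a) (n+1-k))"
    by (rule sum.Sigma[symmetric]) auto
  finally show ?thesis .
qed

lemma sum_comp_rhsA_assoc:
  assumes "\<And>k. 1 \<le> k \<Longrightarrow> linear (d k)"
  shows "(\<Sum>k=1..n. d k (rhsA d (n+1-k) x)) = (\<Sum>k=1..n. rhsA d k (d (n+1-k) x))"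
proof -
  have "(\<Sum>k=1..n. d k (rhsA d (n+1-k) x)) = (\<Sum>k=1..n. \<Sum>a=1..n-k. d k (d a (d (n+1-k-a) x)))"
    by (intro sum.cong refl) (simp add: rhsA_eq_sum_comp linear_sum[OF assms] diff_diff_add)
  also have "\<dots> = (\<Sum>k=1..n. \<Sum>a=1..k-1. d a (d (k-a) (d (n+1-k) x)))"
    by (rule sum_split_first_eq_sum_split_last)
  finally show ?thesis
    by (simp add: rhsA_eq_sum_comp)
qed

lemma delta_comm_rhsA:
  assumes "linear delta" and lin: "\<And>k. 1 \<le> k \<Longrightarrow> linear (d k)"
    and anticomm: "\<And>k y. 1 \<le> k \<Longrightarrow> k \<le> n \<Longrightarrow> delta (d k y) = - d k (delta y) - rhsA d k y"
  shows "delta (rhsA d (n+1) x) = rhsA d (n+1) (delta x)"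
proof -
  have move_delta: "delta (d k (d (n+1-k) x))
      = d k (d (n+1-k) (delta x)) + (d k (rhsA d (n+1-k) x) - rhsA d k (d (n+1-k) x))"
    if "k \<in> {1..n}" for k
  proof -
    have "delta (d k (d (n+1-k) x)) = - d k (delta (d (n+1-k) x)) - rhsA d k (d (n+1-k) x)"
      using anticomm that by auto
    also have "delta (d (n+1-k) x) = - d (n+1-k) (delta x) - rhsA d (n+1-k) x"
      using anticomm that by auto
    finally show ?thesis
      using that by (simp add: linear_diff[OF lin] linear_neg[OF lin] algebra_simps)
  qed
  have "delta (rhsA d (n+1) x) = (\<Sum>k=1..n. delta (d k (d (n+1-k) x)))"
    by (simp add: rhsA_eq_sum_comp linear_sum[OF assms(1)])
  also have "\<dots> = (\<Sum>k=1..n. d k (d (n+1-k) (delta x)))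
      + ((\<Sum>k=1..n. d k (rhsA d (n+1-k) x)) - (\<Sum>k=1..n. rhsA d k (d (n+1-k) x)))"
    by (simp only: sum.cong[OF refl move_delta] sum.distrib sum_subtractf)
  also have "(\<Sum>k=1..n. d k (d (n+1-k) (delta x))) = rhsA d (n+1) (delta x)"
    by (simp add: rhsA_eq_sum_comp)
  finally show ?thesis
    using sum_comp_rhsA_assoc[OF lin, where n=n and x=x] by simp
qed

theorem lemmaA1:
  fixes V :: "int \<Rightarrow> 'v::real_vector set"
    and delta :: "'v \<Rightarrow> 'v"
    and d :: "nat \<Rightarrow> 'v \<Rightarrow> 'v"
    and n :: nat
  assumes "n \<ge> 1"
    and "\<And>p. subspace (V p)"
    and "linear delta" and "homog V 1 delta"
    and "\<And>k. 1 \<le> k \<Longrightarrow> linear (d k)"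
    and "\<And>k. 1 \<le> k \<Longrightarrow> homog V 1 (d k)"
    and "\<And>k. 1 \<le> k \<Longrightarrow> k \<le> n \<Longrightarrow> solvesA delta d k"
  shows "compatibleA delta d (n + 1)"
proof -
  have "delta (rhsA d (n+1) x) = rhsA d (n+1) (delta x)" for x
    using assms(3,5) delta_comp_eq_if_solvesA[OF assms(7)] by (rule delta_comm_rhsA)
  then show ?thesis
    by (simp add: compatibleA_def gbr_1_2)
qed

end
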